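(* Let $\sigma$ be a super filling of $\mathrm{dg}(\lambda)$ (order $<_2$) that is not $\Phi$-trivial, with distinguished label $a$ and with distinguished cell in row $r$. Suppose either (1) $\sigma$ is $\Phi$-nondegenerate and $u$ is the distinguished cell, or (2) $\sigma$ is $\Phi$-degenerate and $u$ is any cell of the degenerate segment with $|\sigma(u)|=a$. Then every non-degenerate triple containing $u$ is a quinv triple in $\Phi_u(\sigma)$ if and only if it is a quinv triple in $\sigma$.
   Context: Let $\lambda=(\lambda_1\ge\dots\ge\lambda_k>0)$ be a partition; $\mathrm{dg}(\lambda)=\{(r,i):1\le i\le k,1\le r\le\lambda_i\}$, $(r,i)$ being row $r$ from the bottom and column $i$ from the left (columns bottom-justified of heights $\lambda_i$). $\mathcal A=\{1,\bar1,2,\bar2,\dots\}$ consists of positive letters $i$ and negative letters $\bar i$, $|i|=|\bar i|=i$, totally ordered by $<_2$: $0<1<2<3<\cdots<\bar3<\bar2<\bar1$. $I(a,b)=1$ if $a>b$ or $a=b$ is negative, and $I(a,b)=0$ if $a<b$ or $a=b$ is positive. A super filling is $\sigma:\mathrm{dg}(\lambda)\to\mathcal A$. A triple is either three cells $(r+1,i),(r,i),(r,j)$ with $i<j$ (non-degenerate), or (degenerate) two cells $(r,i),(r,j)$ with $i<j$ and $\lambda_i=r$; with $a'=\sigma((r+1,i))$ ($a'=0$ if degenerate), $b=\sigma((r,i))$, $c=\sigma((r,j))$, it is a quinv triple iff exactly one of $I(a',b)=1$, $I(c,b)=0$, $I(a',c)=0$ holds. The reading order goes through rows top to bottom, each row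 right to left. $\Phi_u(\sigma)$ changes the sign of the entry in cell $u$. The distinguished label of $\sigma$ is the smallest positive integer $a$ such that some cell $(r,j)$ has $|\sigma((r,j))|=a$ and $r>a$; if none exists $\sigma$ is $\Phi$-trivial. Otherwise the distinguished cell is the first cell in reading order whose entry has absolute value $a$; $\sigma$ is $\Phi$-degenerate if the distinguished cell belongs to some degenerate triple and $\Phi$-nondegenerate otherwise. If $r$ is the row of the distinguished cell, the degenerate segment is the set of cells of row $r$ that belong to degenerate triples. *)

theory Defs
  imports Main
begin

text \<open>Letters: Zero is the auxiliary letter 0 (used only for degenerate triples),
  Pos i is the positive letter i, Neg i is the negative letter bar i.\<close>
datatype letter = Zero | Pos nat | Neg nat

fun absl :: "letter \<Rightarrow> nat" where
  "absl Zero = 0" | "absl (Pos i) = i" | "absl (Neg i) = i"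

fun is_neg :: "letter \<Rightarrow> bool" where
  "is_neg (Neg i) = True" | "is_neg _ = False"

fun lt2 :: "letter \<Rightarrow> letter \<Rightarrow> bool" where
  "lt2 Zero Zero = False"
| "lt2 Zero _ = True"
| "lt2 _ Zero = False"
| "lt2 (Pos i) (Pos j) = (i < j)"
| "lt2 (Pos i) (Neg j) = True"
| "lt2 (Neg i) (Pos j) = False"
| "lt2 (Neg i) (Neg j) = (j < i)"

definition Iv :: "letter \<Rightarrow> letter \<Rightarrow> bool" where
  "Iv a b \<longleftrightarrow> lt2 b a \<or> (a = b \<and> is_neg a)"

definition quinv3 :: "letter \<Rightarrow> letter \<Rightarrow> letter \<Rightarrow> bool" where
  "quinv3 a' b c \<longleftrightarrow>
     (let P = Iv a' b; Q = \<not> Iv c b; R = \<not> Iv a' c in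
       (P \<and> \<not> Q \<and> \<not> R) \<or> (\<not> P \<and> Q \<and> \<not> R) \<or> (\<not> P \<and> \<not> Q \<and> R))"

text \<open>Partitions as lists lambda_1 >= ... >= lambda_k > 0; column i (1-based) has height lam!(i-1).\<close>
definition is_partition :: "nat list \<Rightarrow> bool" where
  "is_partition lam \<longleftrightarrow> sorted_wrt (\<ge>) lam \<and> (\<forall>x\<in>set lam. 0 < x)"

text \<open>Cells are (r,i): row r from the bottom, column i from the left, both 1-based.\<close>
definition dg :: "nat list \<Rightarrow> (nat \<times> nat) set" where
  "dg lam = {(r, i). 1 \<le> i \<and> i \<le> length lam \<and> 1 \<le> r \<and> r \<le> lam ! (i - 1)}"

type_synonym filling = "nat \<times> nat \<Rightarrow> letter"

definition super_filling :: "nat list \<Rightarrow> filling \<Rightarrow> bool" where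
  "super_filling lam \<sigma> \<longleftrightarrow> (\<forall>c\<in>dg lam. \<sigma> c \<noteq> Zero \<and> absl (\<sigma> c) \<ge> 1)"

definition ntriple :: "nat list \<Rightarrow> nat \<times> nat \<times> nat \<Rightarrow> bool" where
  "ntriple lam t = (case t of (r, i, j) \<Rightarrow>
      i < j \<and> (r + 1, i) \<in> dg lam \<and> (r, i) \<in> dg lam \<and> (r, j) \<in> dg lam)"

definition ntriple_cells :: "nat \<times> nat \<times> nat \<Rightarrow> (nat \<times> nat) set" where
  "ntriple_cells t = (case t of (r, i, j) \<Rightarrow> {(r + 1, i), (r, i), (r, j)})"

definition dtriple :: "nat list \<Rightarrow> nat \<times> nat \<times> nat \<Rightarrow> bool" where
  "dtriple lam t = (case t of (r, i, j) \<Rightarrow>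
      i < j \<and> (r, i) \<in> dg lam \<and> (r, j) \<in> dg lam \<and> lam ! (i - 1) = r)"

definition dtriple_cells :: "nat \<times> nat \<times> nat \<Rightarrow> (nat \<times> nat) set" where
  "dtriple_cells t = (case t of (r, i, j) \<Rightarrow> {(r, i), (r, j)})"

definition quinv_ntriple :: "filling \<Rightarrow> nat \<times> nat \<times> nat \<Rightarrow> bool" where
  "quinv_ntriple \<sigma> t = (case t of (r, i, j) \<Rightarrow>
      quinv3 (\<sigma> (r + 1, i)) (\<sigma> (r, i)) (\<sigma> (r, j)))"

fun negl :: "letter \<Rightarrow> letter" where
  "negl Zero = Zero" | "negl (Pos i) = Neg i" | "negl (Neg i) = Pos i"

definition Phi :: "nat \<times> nat \<Rightarrow> filling \<Rightarrow> filling" where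
  "Phi u \<sigma> = \<sigma>(u := negl (\<sigma> u))"

text \<open>Reading order: rows top to bottom, each row right to left.
  read_before c d: c comes strictly before d.\<close>
definition read_before :: "nat \<times> nat \<Rightarrow> nat \<times> nat \<Rightarrow> bool" where
  "read_before c d \<longleftrightarrow> fst c > fst d \<or> (fst c = fst d \<and> snd c > snd d)"

definition phi_trivial :: "nat list \<Rightarrow> filling \<Rightarrow> bool" where
  "phi_trivial lam \<sigma> \<longleftrightarrow>
     \<not> (\<exists>a>0. \<exists>(r, j)\<in>dg lam. absl (\<sigma> (r, j)) = a \<and> r > a)"

definition dist_label :: "nat list \<Rightarrow> filling \<Rightarrow> nat" where
  "dist_label lam \<sigma> =
     (LEAST a. a > 0 \<and> (\<exists>(r, j)\<in>dg lam. absl (\<sigma> (r, j)) = a \<and> r > a))"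

definition dist_cell :: "nat list \<Rightarrow> filling \<Rightarrow> nat \<times> nat" where
  "dist_cell lam \<sigma> = (THE d. d \<in> dg lam \<and> absl (\<sigma> d) = dist_label lam \<sigma> \<and>
      (\<forall>c\<in>dg lam. absl (\<sigma> c) = dist_label lam \<sigma> \<longrightarrow> c = d \<or> read_before d c))"

definition phi_degenerate :: "nat list \<Rightarrow> filling \<Rightarrow> bool" where
  "phi_degenerate lam \<sigma> \<longleftrightarrow>
     (\<exists>t. dtriple lam t \<and> dist_cell lam \<sigma> \<in> dtriple_cells t)"

definition degenerate_segment :: "nat list \<Rightarrow> filling \<Rightarrow> (nat \<times> nat) set" where
  "degenerate_segment lam \<sigma> =
     {c. fst c = fst (dist_cell lam \<sigma>) \<and> (\<exists>t. dtriple lam t \<and> c \<in> dtriple_cells t)}"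

end

theory Submission
  imports Defs "HOL-Library.Product_Lexorder"
begin

text \<open>Let \<open>a\<close> be the distinguished label and \<open>d\<close> the distinguished cell. By minimality
  of \<open>a\<close>, every entry in a row \<open>\<ge> a\<close> has absolute value \<open>\<ge> a\<close>; by the choice of \<open>d\<close>,
  those read before \<open>d\<close> even exceed \<open>a\<close>. The cell \<open>u\<close> lies in the row of \<open>d\<close>, and if it is
  the lower-left cell of a non-degenerate triple then its column is higher than the row,
  so (columns weakly decrease) it belongs to no degenerate triple and hence \<open>u = d\<close>.
  So in every non-degenerate triple through \<open>u\<close>, \<open>|\<sigma>(u)|\<close> is minimal, strictly so
  against the cells read before \<open>u\<close>, and under these conditions the sign of \<open>\<sigma>(u)\<close>
  does not affect the quinv condition.\<close>

lemma quinv3_negl_first: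
  "0 < absl x \<Longrightarrow> absl x \<le> absl b \<Longrightarrow> absl x \<le> absl c \<Longrightarrow>
    quinv3 (negl x) b c = quinv3 x b c"
  by (cases x; cases b; cases c) (auto simp: quinv3_def Iv_def)

lemma quinv3_negl_second:
  "0 < absl x \<Longrightarrow> absl x < absl a' \<Longrightarrow> absl x < absl c \<Longrightarrow>
    quinv3 a' (negl x) c = quinv3 a' x c"
  by (cases x; cases a'; cases c) (auto simp: quinv3_def Iv_def)

lemma quinv3_negl_third:
  "0 < absl x \<Longrightarrow> absl x < absl a' \<Longrightarrow> absl x \<le> absl b \<Longrightarrow>
    quinv3 a' b (negl x) = quinv3 a' b x"
  by (cases x; cases a'; cases b) (auto simp: quinv3_def Iv_def)

lemma read_before_iff_less: "read_before c d \<longleftrightarrow> d < c"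
  by (cases c; cases d) (auto simp: read_before_def)


lemma quinv_ntriple_Phi:
  assumes "i < j" "u \<in> ntriple_cells (r, i, j)" "0 < absl (\<sigma> u)"
    and "\<forall>c\<in>ntriple_cells (r, i, j). absl (\<sigma> u) \<le> absl (\<sigma> c)"
    and "\<forall>c\<in>ntriple_cells (r, i, j). read_before c u \<longrightarrow> absl (\<sigma> u) < absl (\<sigma> c)"
  shows "quinv_ntriple (Phi u \<sigma>) (r, i, j) = quinv_ntriple \<sigma> (r, i, j)"
proof -
  note cells = assms(2)[unfolded ntriple_cells_def]
    and bounds = assms(4,5)[unfolded ntriple_cells_def]
  have distinct: "(r + 1, i) \<noteq> (r, i)" "(r, i) \<noteq> (r, j)" "(r + 1, i) \<noteq> (r, j)"
    using assms(1) by auto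
  from cells consider "u = (r + 1, i)" | "u = (r, i)" | "u = (r, j)"
    by blast
  then show ?thesis
  proof cases
    case 1
    then show ?thesis
      using bounds distinct assms(3) by (simp add: quinv_ntriple_def Phi_def quinv3_negl_first)
  next
    case 2
    then show ?thesis
      using bounds distinct assms(1,3)
      by (simp add: quinv_ntriple_def Phi_def quinv3_negl_second read_before_def)
  next
    case 3
    then show ?thesis
      using bounds distinct assms(1,3)
      by (simp add: quinv_ntriple_def Phi_def quinv3_negl_third read_before_def)
  qed
qed

lemma finite_dg: "finite (dg lam)"
proof (rule finite_subset)
  show "dg lam \<subseteq> {..sum_list lam} \<times> {..length lam}"
    by (auto simp: dg_def intro!: order_trans[OF _ member_le_sum_list])
qed simp

lemma dist_cell_eq_Max:
  assumes "\<exists>c\<in>dg lam. absl (\<sigma> c) = dist_label lam \<sigma>"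
  shows "dist_cell lam \<sigma> = Max {c \<in> dg lam. absl (\<sigma> c) = dist_label lam \<sigma>}"
proof -
  let ?S = "{c \<in> dg lam. absl (\<sigma> c) = dist_label lam \<sigma>}"
  have "finite ?S" "?S \<noteq> {}"
    using finite_dg assms by auto
  then have Max_mem: "Max ?S \<in> dg lam" "absl (\<sigma> (Max ?S)) = dist_label lam \<sigma>"
    and le_Max: "\<And>c. c \<in> ?S \<Longrightarrow> c \<le> Max ?S"
    using Max_in[of ?S] by auto
  show ?thesis
    unfolding dist_cell_def read_before_iff_less
  proof (rule the_equality)
    fix d
    assume "d \<in> dg lam \<and> absl (\<sigma> d) = dist_label lam \<sigma> \<and>
      (\<forall>c\<in>dg lam. absl (\<sigma> c) = dist_label lam \<sigma> \<longrightarrow> c = d \<or> c < d)"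
    then have "d \<le> Max ?S" "Max ?S = d \<or> Max ?S < d"
      using Max_mem le_Max[of d] by auto
    then show "d = Max ?S"
      by auto
  qed (use Max_mem le_Max in \<open>auto simp: order.order_iff_strict\<close>)
qed

lemma dist_label_witness:
  assumes "\<not> phi_trivial lam \<sigma>"
  shows "\<exists>c\<in>dg lam. absl (\<sigma> c) = dist_label lam \<sigma> \<and> dist_label lam \<sigma> < fst c"
proof -
  let ?Q = "\<lambda>a. 0 < a \<and> (\<exists>(r, j)\<in>dg lam. absl (\<sigma> (r, j)) = a \<and> a < r)"
  have "?Q (dist_label lam \<sigma>)"
    unfolding dist_label_def by (rule LeastI_ex) (use assms in \<open>auto simp: phi_trivial_def\<close>)
  then show ?thesis
    by auto
qed

lemma dist_label_le_entry:
  assumes "super_filling lam \<sigma>" "c \<in> dg lam" "dist_label lam \<sigma> \<le> fst c"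
  shows "dist_label lam \<sigma> \<le> absl (\<sigma> c)"
proof (rule ccontr)
  let ?Q = "\<lambda>a. 0 < a \<and> (\<exists>(r, j)\<in>dg lam. absl (\<sigma> (r, j)) = a \<and> a < r)"
  assume small: "\<not> ?thesis"
  then have "absl (\<sigma> c) < (LEAST a. ?Q a)"
    unfolding dist_label_def by simp
  then have "\<not> ?Q (absl (\<sigma> c))"
    by (rule not_less_Least)
  moreover have "0 < absl (\<sigma> c)"
    using assms(1,2) by (auto simp: super_filling_def)
  ultimately show False
    using assms(2,3) small by (cases c) auto
qed

lemma dist_cell_spec:
  assumes "\<not> phi_trivial lam \<sigma>"
  shows "dist_cell lam \<sigma> \<in> dg lam" "absl (\<sigma> (dist_cell lam \<sigma>)) = dist_label lam \<sigma>"
    and "dist_label lam \<sigma> < fst (dist_cell lam \<sigma>)"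
proof -
  let ?S = "{c \<in> dg lam. absl (\<sigma> c) = dist_label lam \<sigma>}"
  obtain c where c: "c \<in> ?S" "dist_label lam \<sigma> < fst c"
    using dist_label_witness[OF assms] by auto
  have fin: "finite ?S"
    using finite_dg by auto
  have "Max ?S \<in> ?S"
    using Max_in[OF fin] c(1) by blast
  moreover have "fst c \<le> fst (Max ?S)"
    using Max_ge[OF fin c(1)]
    by (cases c, cases "Max ?S") (auto simp: less_eq_prod_def)
  moreover have "dist_cell lam \<sigma> = Max ?S"
    using c(1) by (intro dist_cell_eq_Max) blast
  ultimately show "dist_cell lam \<sigma> \<in> dg lam" "absl (\<sigma> (dist_cell lam \<sigma>)) = dist_label lam \<sigma>"
    and "dist_label lam \<sigma> < fst (dist_cell lam \<sigma>)"
    using c(2) by simp_all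
qed

lemma dist_label_less_entry_if_read_before:
  assumes "super_filling lam \<sigma>" "\<not> phi_trivial lam \<sigma>"
    and "c \<in> dg lam" "dist_label lam \<sigma> \<le> fst c" "read_before c (dist_cell lam \<sigma>)"
  shows "dist_label lam \<sigma> < absl (\<sigma> c)"
proof -
  have "c \<notin> {c \<in> dg lam. absl (\<sigma> c) = dist_label lam \<sigma>}"
  proof
    assume "c \<in> {c \<in> dg lam. absl (\<sigma> c) = dist_label lam \<sigma>}"
    then have "c \<le> dist_cell lam \<sigma>"
      using finite_dg[of lam] by (subst dist_cell_eq_Max) (auto intro: Max_ge)
    then show False
      using assms(5) by (simp add: read_before_iff_less)
  qed
  then show ?thesis
    using assms(3) dist_label_le_entry[OF assms(1,3,4)] by auto
qed

lemma lower_cell_notin_dtriple_cells: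
  assumes "is_partition lam" "(r + 1, i) \<in> dg lam" "dtriple lam t"
  shows "(r, i) \<notin> dtriple_cells t"
proof
  assume "(r, i) \<in> dtriple_cells t"
  then obtain i' j' where t: "t = (r, i', j')" "i = i' \<or> i = j'"
    by (auto simp: dtriple_cells_def split: prod.splits)
  have "r + 1 \<le> lam ! (i - 1)" "1 \<le> i" "i \<le> length lam"
    using assms(2) by (auto simp: dg_def)
  moreover have "i' < j'" "lam ! (i' - 1) = r" "1 \<le> i'"
    using assms(3) t(1) by (auto simp: dtriple_def dg_def)
  moreover have "sorted_wrt (\<ge>) lam"
    using assms(1) by (simp add: is_partition_def)
  ultimately show False
    using t(2) sorted_wrt_nth_less[of "(\<ge>)" lam "i' - 1" "i - 1"]
    by (auto simp: less_diff_conv2)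
qed

lemma lower_cell_notin_degenerate_segment:
  "is_partition lam \<Longrightarrow> (r + 1, i) \<in> dg lam \<Longrightarrow> (r, i) \<notin> degenerate_segment lam \<sigma>"
  using lower_cell_notin_dtriple_cells by (auto simp: degenerate_segment_def)

theorem mainTheorem10:
  fixes lam :: "nat list" and \<sigma> :: filling and u :: "nat \<times> nat"
  assumes "is_partition lam"
    and "super_filling lam \<sigma>"
    and "\<not> phi_trivial lam \<sigma>"
    and "(\<not> phi_degenerate lam \<sigma> \<and> u = dist_cell lam \<sigma>) \<or>
         (phi_degenerate lam \<sigma> \<and> u \<in> degenerate_segment lam \<sigma> \<and>
            absl (\<sigma> u) = dist_label lam \<sigma>)"
  shows "\<forall>t. ntriple lam t \<and> u \<in> ntriple_cells t \<longrightarrow>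
           (quinv_ntriple (Phi u \<sigma>) t \<longleftrightarrow> quinv_ntriple \<sigma> t)"
proof (intro allI impI, elim conjE)
  fix t
  assume t: "ntriple lam t" "u \<in> ntriple_cells t"
  obtain r i j where t_eq: "t = (r, i, j)"
    by (cases t)
  have cells: "i < j" "\<forall>c\<in>ntriple_cells t. c \<in> dg lam" "(r + 1, i) \<in> dg lam"
    using t(1) by (auto simp: t_eq ntriple_def ntriple_cells_def)
  define d where "d = dist_cell lam \<sigma>"
  have u_label: "absl (\<sigma> u) = dist_label lam \<sigma>" and u_row: "fst u = fst d"
    using assms(4) dist_cell_spec[OF assms(3)] by (auto simp: d_def degenerate_segment_def)
  have u_lower: "u = (r, i) \<Longrightarrow> u = d"
    using assms(4) lower_cell_notin_degenerate_segment[OF assms(1) cells(3)]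
    by (auto simp: d_def)
  have rows: "dist_label lam \<sigma> \<le> fst c" if "c \<in> ntriple_cells t" for c
    using that t(2) u_row dist_cell_spec(3)[OF assms(3)]
    by (auto simp: t_eq ntriple_cells_def d_def)
  then have le: "\<forall>c\<in>ntriple_cells t. absl (\<sigma> u) \<le> absl (\<sigma> c)"
    using cells(2) u_label dist_label_le_entry[OF assms(2)] by auto
  have "read_before c d" if "c \<in> ntriple_cells t" "read_before c u" for c
    using that t(2) u_row u_lower cells(1)
    by (auto simp: t_eq ntriple_cells_def read_before_def)
  then have lt: "\<forall>c\<in>ntriple_cells t. read_before c u \<longrightarrow> absl (\<sigma> u) < absl (\<sigma> c)"
    using rows cells(2) u_label dist_label_less_entry_if_read_before[OF assms(2,3)]
    by (auto simp: d_def)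
  have "u \<in> dg lam"
    using cells(2) t(2) by blast
  then have "0 < absl (\<sigma> u)"
    using assms(2) by (fastforce simp: super_filling_def)
  then show "quinv_ntriple (Phi u \<sigma>) t = quinv_ntriple \<sigma> t"
    using quinv_ntriple_Phi cells(1) t(2) le lt by (simp add: t_eq)
qed

end
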